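(* Fix $0<\delta<1$, and let $\epsilon=\frac12+\frac\delta2$, $\epsilon'=\frac12$, $c=\frac{4}{\epsilon-\epsilon'}=\frac{8}{\delta}$. For every even $n$, let $\mathcal M_n\subseteq\mathcal G_n$ be any subset with $|\mathcal M_n|\le 2^{\sqrt n}$ (and $\mathcal M_n=\emptyset$ for odd $n$). Then the hereditary closure of $\bigcup_{n\in\mathbb N}\mathcal M_n$ has at most factorial speed of growth, i.e. it contains at most $2^{O(n\log n)}$ graphs on vertex set $[n]$.
   Context: For even $n$, a good graph on $n$ vertices is a bipartite graph with vertex set $[n]$ and parts $\{1,\dots,\frac n2\}$ and $\{\frac n2+1,\dots,n\}$, having exactly $\lfloor(\frac n2)^{2-\epsilon}\rfloor$ edges, such that every induced subgraph with at most $(\frac n2)^{\epsilon'}$ vertices has a vertex of degree less than $c$ (within that subgraph). $\mathcal G_n$ denotes the set of good graphs on $n$ vertices (with $\epsilon,\epsilon',c$ as in the claim). The hereditary closure of a family $\mathcal M$ is the set of all graphs (on vertex sets $[k]$) isomorphic to an induced subgraph of some graph in $\mathcal M$. A family has at most factorial speed if the number of its members with vertex set $[n]$ is $2^{O(n\log n)}$. *)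

theory Defs
  imports Complex_Main
begin

text \<open>A (simple) graph with vertex set [n] = {1..n} is represented by its edge set,
  a set of 2-element subsets of {1..n}. A labelled graph in a family is a pair (n, E).\<close>

definition is_graph_on :: "nat \<Rightarrow> nat set set \<Rightarrow> bool" where
  "is_graph_on n E \<longleftrightarrow>
     E \<subseteq> {{u, v} | u v. u \<in> {1..n} \<and> v \<in> {1..n} \<and> u \<noteq> v}"

definition good_graph :: "real \<Rightarrow> real \<Rightarrow> real \<Rightarrow> nat \<Rightarrow> nat set set \<Rightarrow> bool" where
  "good_graph eps eps' c n E \<longleftrightarrow>
     even n \<and> is_graph_on n E \<and>
     (\<forall>e\<in>E. \<exists>u v. e = {u, v} \<and> u \<in> {1..n div 2} \<and> v \<in> {n div 2 + 1..n}) \<and>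
     card E = nat \<lfloor>(real n / 2) powr (2 - eps)\<rfloor> \<and>
     (\<forall>S \<subseteq> {1..n}. S \<noteq> {} \<and> real (card S) \<le> (real n / 2) powr eps' \<longrightarrow>
        (\<exists>v\<in>S. real (card {u\<in>S. {u, v} \<in> E}) < c))"

definition good_graphs :: "real \<Rightarrow> real \<Rightarrow> real \<Rightarrow> nat \<Rightarrow> nat set set set" where
  "good_graphs eps eps' c n = {E. good_graph eps eps' c n E}"

definition hereditary_closure :: "(nat \<times> nat set set) set \<Rightarrow> (nat \<times> nat set set) set" where
  "hereditary_closure M =
     {(k, F). is_graph_on k F \<and>
        (\<exists>(n, E)\<in>M. \<exists>f. inj_on f {1..k} \<and> f ` {1..k} \<subseteq> {1..n} \<and>
           (\<forall>u\<in>{1..k}. \<forall>v\<in>{1..k}. u \<noteq> v \<longrightarrow> ({f u, f v} \<in> E \<longleftrightarrow> {u, v} \<in> F)))}"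

definition at_most_factorial_speed :: "(nat \<times> nat set set) set \<Rightarrow> bool" where
  "at_most_factorial_speed H \<longleftrightarrow>
     (\<exists>C N. \<forall>n\<ge>N. real (card {F. (n, F) \<in> H}) \<le> 2 powr (C * real n * log 2 (real n)))"

end

theory Submission
  imports Defs "HOL-Library.FuncSet"
begin

text \<open>A graph on \<open>[k]\<close> in the hereditary closure is induced by an embedding \<open>f\<close> of \<open>[k]\<close>
  into some host graph on \<open>[n]\<close>. If \<open>n < 2k\<^sup>2\<close>, it is determined by the host (at most
  \<open>2\<^bsup>\<surd>n\<^esup> \<le> 4\<^sup>k\<close> choices for each \<open>n\<close>) and by \<open>f\<close> (at most \<open>n\<^sup>k\<close> choices), so there are
  \<open>k\<^bsup>O(k)\<^esup>\<close> of them. If \<open>n \<ge> 2k\<^sup>2\<close>, then \<open>k \<le> (n/2)\<^bsup>1/2\<^esup>\<close>, so goodness of the host gives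
  every nonempty vertex set of the induced graph a vertex of degree \<open>< c\<close> in it: the graph is
  \<open>\<lceil>c\<rceil>\<close>-degenerate. Choosing such a vertex and its at most \<open>\<lceil>c\<rceil>\<close> neighbours (\<open>k\<^bsup>O(1)\<^esup>\<close> ways),
  deleting it and recursing shows that there are only \<open>k\<^bsup>O(k)\<^esup>\<close> degenerate graphs on \<open>[k]\<close>.\<close>

definition edges_on :: "nat set \<Rightarrow> nat set set" where
  "edges_on S = {{u, v} | u v. u \<in> S \<and> v \<in> S \<and> u \<noteq> v}"

definition degenerate_graphs :: "nat \<Rightarrow> nat set \<Rightarrow> nat set set set" where
  "degenerate_graphs d S =
     {F. F \<subseteq> edges_on S \<and> (\<forall>T\<subseteq>S. T \<noteq> {} \<longrightarrow> (\<exists>v\<in>T. card {u\<in>T. {u, v} \<in> F} \<le> d))}"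

lemma card_subsets_card_le:
  assumes "finite X"
  shows "card {N. N \<subseteq> X \<and> card N \<le> d} \<le> (d + 1) * (card X + 1) ^ d"
proof -
  have "{N. N \<subseteq> X \<and> card N \<le> d} = (\<Union>j\<le>d. {N. N \<subseteq> X \<and> card N = j})" by auto
  then have "card {N. N \<subseteq> X \<and> card N \<le> d} \<le> (\<Sum>j\<le>d. card {N. N \<subseteq> X \<and> card N = j})"
    using card_UN_le[of "{..d}" "\<lambda>j. {N. N \<subseteq> X \<and> card N = j}"] by simp
  also have "\<dots> = (\<Sum>j\<le>d. card X choose j)" using n_subsets[OF assms] by simp
  also have "\<dots> \<le> (\<Sum>j\<le>d. (card X + 1) ^ d)"
  proof (rule sum_mono)
    fix j assume "j \<in> {..d}"
    have "card X choose j \<le> (card X + 1) choose j" by (rule binomial_right_mono) simp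
    also have "\<dots> \<le> (card X + 1) ^ j"
      by (cases "j \<le> card X + 1") (auto intro: binomial_le_pow simp: binomial_eq_0)
    also have "\<dots> \<le> (card X + 1) ^ d" using \<open>j \<in> {..d}\<close> by (simp add: power_increasing)
    finally show "card X choose j \<le> (card X + 1) ^ d" .
  qed
  finally show ?thesis by simp
qed

lemma finite_degenerate_graphs: "finite S \<Longrightarrow> finite (degenerate_graphs d S)"
  by (rule finite_subset[of _ "Pow (Pow S)"]) (auto simp: degenerate_graphs_def edges_on_def)

lemma degenerate_graphs_remove_vertex:
  assumes "F \<in> degenerate_graphs d S" "S \<noteq> {}" "finite S"
  obtains v N F' where "v \<in> S" "N \<subseteq> S - {v}" "card N \<le> d"
    "F' \<in> degenerate_graphs d (S - {v})" "F = F' \<union> (\<lambda>u. {u, v}) ` N"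
proof -
  have F_edges: "F \<subseteq> edges_on S"
    and sparse: "\<forall>T\<subseteq>S. T \<noteq> {} \<longrightarrow> (\<exists>v\<in>T. card {u\<in>T. {u, v} \<in> F} \<le> d)"
    using assms(1) by (auto simp: degenerate_graphs_def)
  then obtain v where v: "v \<in> S" "card {u\<in>S. {u, v} \<in> F} \<le> d"
    using assms(2) by blast
  define N where "N = {u\<in>S. {u, v} \<in> F}"
  define F' where "F' = {e\<in>F. v \<notin> e}"
  have "N \<subseteq> S - {v}"
    using F_edges by (auto simp: N_def edges_on_def doubleton_eq_iff)
  moreover have "F' \<in> degenerate_graphs d (S - {v})"
    unfolding degenerate_graphs_def
  proof (intro CollectI conjI allI impI)
    show "F' \<subseteq> edges_on (S - {v})"
      using F_edges unfolding F'_def edges_on_def by blast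
    fix T assume T: "T \<subseteq> S - {v}" "T \<noteq> {}"
    then obtain w where w: "w \<in> T" "card {u\<in>T. {u, w} \<in> F} \<le> d"
      using sparse by (metis Diff_subset order_trans)
    have "finite T" using T(1) assms(3) finite_subset by blast
    then have "card {u\<in>T. {u, w} \<in> F'} \<le> card {u\<in>T. {u, w} \<in> F}"
      by (intro card_mono) (auto simp: F'_def)
    then show "\<exists>w\<in>T. card {u\<in>T. {u, w} \<in> F'} \<le> d" using w le_trans by blast
  qed
  moreover have "F = F' \<union> (\<lambda>u. {u, v}) ` N"
  proof (intro equalityI subsetI)
    fix e assume "e \<in> F"
    then obtain a b where e: "e = {a, b}" "a \<in> S" "b \<in> S"
      using F_edges unfolding edges_on_def by blast
    have "e = {b, v} \<or> e = {a, v}" if "v \<in> e" using e that by auto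
    then show "e \<in> F' \<union> (\<lambda>u. {u, v}) ` N"
      using \<open>e \<in> F\<close> e unfolding F'_def N_def by blast
  qed (auto simp: F'_def N_def)
  ultimately show ?thesis using that v unfolding N_def by blast
qed

lemma degenerate_graphs_subset_UN_remove_vertex:
  assumes "S \<noteq> {}" "finite S"
  shows "degenerate_graphs d S \<subseteq>
    (\<Union>v\<in>S. \<Union>N\<in>{N. N \<subseteq> S - {v} \<and> card N \<le> d}.
       (\<lambda>F'. F' \<union> (\<lambda>u. {u, v}) ` N) ` degenerate_graphs d (S - {v}))"
proof
  fix F assume "F \<in> degenerate_graphs d S"
  then obtain v N F' where "v \<in> S" "N \<subseteq> S - {v}" "card N \<le> d"
    "F' \<in> degenerate_graphs d (S - {v})" "F = F' \<union> (\<lambda>u. {u, v}) ` N"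
    using degenerate_graphs_remove_vertex assms by blast
  then show "F \<in> (\<Union>v\<in>S. \<Union>N\<in>{N. N \<subseteq> S - {v} \<and> card N \<le> d}.
       (\<lambda>F'. F' \<union> (\<lambda>u. {u, v}) ` N) ` degenerate_graphs d (S - {v}))"
    by blast
qed

lemma card_UN_UN_image_le:
  assumes "finite S" "\<And>v. v \<in> S \<Longrightarrow> finite (A v)" "\<And>v. v \<in> S \<Longrightarrow> finite (B v)"
  shows "card (\<Union>v\<in>S. \<Union>N\<in>A v. g v N ` B v) \<le> (\<Sum>v\<in>S. card (A v) * card (B v))"
proof -
  have "card (\<Union>v\<in>S. \<Union>N\<in>A v. g v N ` B v) \<le> (\<Sum>v\<in>S. card (\<Union>N\<in>A v. g v N ` B v))"
    using assms(1) by (rule card_UN_le)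
  also have "\<dots> \<le> (\<Sum>v\<in>S. \<Sum>N\<in>A v. card (g v N ` B v))"
    using assms(2) by (intro sum_mono card_UN_le)
  also have "\<dots> \<le> (\<Sum>v\<in>S. \<Sum>N\<in>A v. card (B v))"
    using assms(3) by (intro sum_mono card_image_le)
  finally show ?thesis by simp
qed

lemma card_degenerate_graphs_le:
  assumes "finite S"
  shows "card (degenerate_graphs d S) \<le> (card S * (d + 1) * card S ^ d) ^ card S"
  using assms
proof (induction S rule: finite_remove_induct)
  case empty
  have "degenerate_graphs d {} = {{}}" by (auto simp: degenerate_graphs_def edges_on_def)
  then show ?case by simp
next
  case (remove S)
  define s where "s = card S"
  define Q where "Q = s * (d + 1) * s ^ d"
  have "s \<ge> 1" using remove.hyps by (simp add: s_def Suc_le_eq card_gt_0_iff)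
  have IH: "card (degenerate_graphs d (S - {v})) \<le> Q ^ (s - 1)" if "v \<in> S" for v
  proof -
    have "card (S - {v}) = s - 1" using that remove.hyps(1) by (simp add: s_def)
    then have "card (degenerate_graphs d (S - {v})) \<le> ((s - 1) * (d + 1) * (s - 1) ^ d) ^ (s - 1)"
      using remove.IH[OF that] by simp
    also have "\<dots> \<le> Q ^ (s - 1)" unfolding Q_def by (intro power_mono mult_mono) auto
    finally show ?thesis .
  qed
  have neighbourhoods: "card {N. N \<subseteq> S - {v} \<and> card N \<le> d} \<le> (d + 1) * s ^ d" if "v \<in> S" for v
    using card_subsets_card_le[of "S - {v}" d] that remove.hyps(1) \<open>s \<ge> 1\<close> by (simp add: s_def)
  have "card (degenerate_graphs d S) \<le>
      card (\<Union>v\<in>S. \<Union>N\<in>{N. N \<subseteq> S - {v} \<and> card N \<le> d}.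
        (\<lambda>F'. F' \<union> (\<lambda>u. {u, v}) ` N) ` degenerate_graphs d (S - {v}))"
    using degenerate_graphs_subset_UN_remove_vertex[OF remove.hyps(2,1), of d] remove.hyps(1)
    by (intro card_mono) (auto intro!: finite_degenerate_graphs)
  also have "\<dots> \<le> (\<Sum>v\<in>S. card {N. N \<subseteq> S - {v} \<and> card N \<le> d} * card (degenerate_graphs d (S - {v})))"
    using remove.hyps(1) by (intro card_UN_UN_image_le) (auto intro: finite_degenerate_graphs)
  also have "\<dots> \<le> (\<Sum>v\<in>S. (d + 1) * s ^ d * Q ^ (s - 1))"
    using neighbourhoods IH by (intro sum_mono mult_mono) simp_all
  also have "\<dots> = s * ((d + 1) * s ^ d * Q ^ (s - 1))" by (simp add: s_def)
  also have "\<dots> = Q * Q ^ (s - 1)" unfolding Q_def by (simp only: mult.assoc)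
  also have "\<dots> = Q ^ s" using \<open>s \<ge> 1\<close> by (cases s) auto
  finally show ?case by (simp add: Q_def s_def)
qed

definition induced_graph :: "nat \<Rightarrow> nat set set \<Rightarrow> (nat \<Rightarrow> nat) \<Rightarrow> nat set set" where
  "induced_graph k E f = {{u, v} | u v. u \<in> {1..k} \<and> v \<in> {1..k} \<and> u \<noteq> v \<and> {f u, f v} \<in> E}"

definition induced_graphs_from :: "(nat \<Rightarrow> nat set set set) \<Rightarrow> nat \<Rightarrow> nat \<Rightarrow> nat set set set" where
  "induced_graphs_from M m k = (\<Union>n<m. \<Union>E\<in>M n. induced_graph k E ` (\<Pi>\<^sub>E i\<in>{1..k}. {1..n}))"

lemma finite_induced_graphs_from:
  "(\<And>n. finite (M n)) \<Longrightarrow> finite (induced_graphs_from M m k)"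
  unfolding induced_graphs_from_def by (intro finite_UN_I finite_imageI) (auto simp: finite_PiE)

lemma card_induced_graphs_from_le:
  assumes fin: "\<And>n. finite (M n)" and bound: "\<And>n. n < m \<Longrightarrow> card (M n) \<le> B"
  shows "card (induced_graphs_from M m k) \<le> m * B * m ^ k"
proof -
  have "card (induced_graphs_from M m k)
      \<le> (\<Sum>n<m. card (\<Union>E\<in>M n. induced_graph k E ` (\<Pi>\<^sub>E i\<in>{1..k}. {1..n})))"
    unfolding induced_graphs_from_def by (rule card_UN_le) simp
  also have "\<dots> \<le> (\<Sum>n<m. \<Sum>E\<in>M n. card (induced_graph k E ` (\<Pi>\<^sub>E i\<in>{1..k}. {1..n})))"
    by (intro sum_mono card_UN_le fin)
  also have "\<dots> \<le> (\<Sum>n<m. \<Sum>E\<in>M n. card (\<Pi>\<^sub>E i\<in>{1..k}. {1..n}))"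
    by (intro sum_mono card_image_le) (simp add: finite_PiE)
  also have "\<dots> = (\<Sum>n<m. card (M n) * n ^ k)" by (simp add: card_PiE)
  also have "\<dots> \<le> (\<Sum>n<m. B * m ^ k)"
    using bound by (intro sum_mono mult_mono power_mono) auto
  finally show ?thesis by simp
qed

lemma hereditary_closure_memberE:
  assumes "(k, F) \<in> hereditary_closure (\<Union>n. {(n, E) | E. E \<in> M n})"
  obtains n E f where "is_graph_on k F" "E \<in> M n" "inj_on f {1..k}" "f ` {1..k} \<subseteq> {1..n}"
    "\<forall>u\<in>{1..k}. \<forall>v\<in>{1..k}. u \<noteq> v \<longrightarrow> ({f u, f v} \<in> E \<longleftrightarrow> {u, v} \<in> F)"
  using assms unfolding hereditary_closure_def by blast

lemma induced_graph_eqI: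
  assumes "is_graph_on k F"
    and "\<forall>u\<in>{1..k}. \<forall>v\<in>{1..k}. u \<noteq> v \<longrightarrow> ({f u, f v} \<in> E \<longleftrightarrow> {u, v} \<in> F)"
  shows "F = induced_graph k E f"
  using assms unfolding is_graph_on_def induced_graph_def by blast

lemma induced_graph_restrict: "induced_graph k E (restrict f {1..k}) = induced_graph k E f"
  unfolding induced_graph_def by auto

lemma induced_subgraph_degenerate:
  assumes F: "is_graph_on k F" and inj: "inj_on f {1..k}" and f_into: "f ` {1..k} \<subseteq> V"
    and iff: "\<forall>u\<in>{1..k}. \<forall>v\<in>{1..k}. u \<noteq> v \<longrightarrow> ({f u, f v} \<in> E \<longleftrightarrow> {u, v} \<in> F)"
    and sparse: "\<And>S. S \<subseteq> V \<Longrightarrow> S \<noteq> {} \<Longrightarrow> card S \<le> k \<Longrightarrow> \<exists>v\<in>S. card {u\<in>S. {u, v} \<in> E} \<le> d"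
  shows "F \<in> degenerate_graphs d {1..k}"
  unfolding degenerate_graphs_def
proof (intro CollectI conjI allI impI)
  show "F \<subseteq> edges_on {1..k}" using F unfolding is_graph_on_def edges_on_def .
  fix T assume T: "T \<subseteq> {1..k}" "T \<noteq> {}"
  have inj_T: "inj_on f T" using inj T(1) by (rule inj_on_subset)
  have "card (f ` T) \<le> k"
    using card_image[OF inj_T] card_mono[OF _ T(1)] by simp
  moreover have "f ` T \<subseteq> V" using f_into T(1) by blast
  ultimately obtain w where "w \<in> f ` T" "card {u\<in>f ` T. {u, w} \<in> E} \<le> d"
    using sparse T(2) by blast
  then obtain v where "v \<in> T" and v: "card {u\<in>f ` T. {u, f v} \<in> E} \<le> d" by blast
  have "card {u\<in>T. {u, v} \<in> F} \<le> card {u\<in>f ` T. {u, f v} \<in> E}"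
  proof (rule card_inj_on_le)
    show "inj_on f {u\<in>T. {u, v} \<in> F}" using inj_T by (rule inj_on_subset) blast
    show "f ` {u\<in>T. {u, v} \<in> F} \<subseteq> {u\<in>f ` T. {u, f v} \<in> E}"
    proof (rule image_subsetI)
      fix u assume u: "u \<in> {u\<in>T. {u, v} \<in> F}"
      then have "u \<noteq> v" using F unfolding is_graph_on_def by (auto simp: doubleton_eq_iff)
      then have "{f u, f v} \<in> E" using iff u T(1) \<open>v \<in> T\<close> by blast
      then show "f u \<in> {u\<in>f ` T. {u, f v} \<in> E}" using u by blast
    qed
    show "finite {u\<in>f ` T. {u, f v} \<in> E}" using finite_subset[OF T(1)] by simp
  qed
  then show "\<exists>v\<in>T. card {u\<in>T. {u, v} \<in> F} \<le> d" using \<open>v \<in> T\<close> v le_trans by blast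
qed

lemma good_graph_small_subsets_sparse:
  assumes good: "good_graph eps (1/2) c n E" and n: "2 * k\<^sup>2 \<le> n"
    and S: "S \<subseteq> {1..n}" "S \<noteq> {}" "card S \<le> k"
  shows "\<exists>v\<in>S. card {u\<in>S. {u, v} \<in> E} \<le> nat \<lceil>c\<rceil>"
proof -
  have "real (2 * k\<^sup>2) \<le> real n" using n by (simp only: of_nat_le_iff)
  then have "real k ^ 2 \<le> real n / 2" by simp
  then have "real k \<le> (real n / 2) powr (1/2)"
    by (simp add: powr_half_sqrt real_le_rsqrt)
  then have "real (card S) \<le> (real n / 2) powr (1/2)" using S(3) by linarith
  moreover have "\<forall>S \<subseteq> {1..n}. S \<noteq> {} \<and> real (card S) \<le> (real n / 2) powr (1/2) \<longrightarrow>
      (\<exists>v\<in>S. real (card {u\<in>S. {u, v} \<in> E}) < c)"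
    using good unfolding good_graph_def by (elim conjE)
  ultimately obtain v where "v \<in> S" and "real (card {u\<in>S. {u, v} \<in> E}) < c"
    using S(1,2) by blast
  moreover have "c \<le> real (nat \<lceil>c\<rceil>)" by (rule real_nat_ceiling_ge)
  ultimately have "real (card {u\<in>S. {u, v} \<in> E}) < real (nat \<lceil>c\<rceil>)" by linarith
  then have "card {u\<in>S. {u, v} \<in> E} \<le> nat \<lceil>c\<rceil>" by (simp only: of_nat_less_iff less_imp_le)
  then show ?thesis using \<open>v \<in> S\<close> by blast
qed

lemma hereditary_closure_slice_subset:
  assumes good: "\<And>n. M n \<subseteq> good_graphs eps (1/2) c n"
  shows "{F. (k, F) \<in> hereditary_closure (\<Union>n. {(n, E) | E. E \<in> M n})}
    \<subseteq> induced_graphs_from M (2 * k\<^sup>2) k \<union> degenerate_graphs (nat \<lceil>c\<rceil>) {1..k}"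
proof
  fix F assume "F \<in> {F. (k, F) \<in> hereditary_closure (\<Union>n. {(n, E) | E. E \<in> M n})}"
  then obtain n E f where F: "is_graph_on k F" and "E \<in> M n"
    and inj: "inj_on f {1..k}" and f_into: "f ` {1..k} \<subseteq> {1..n}"
    and iff: "\<forall>u\<in>{1..k}. \<forall>v\<in>{1..k}. u \<noteq> v \<longrightarrow> ({f u, f v} \<in> E \<longleftrightarrow> {u, v} \<in> F)"
    by (auto elim: hereditary_closure_memberE)
  show "F \<in> induced_graphs_from M (2 * k\<^sup>2) k \<union> degenerate_graphs (nat \<lceil>c\<rceil>) {1..k}"
  proof (cases "n < 2 * k\<^sup>2")
    case True
    have "restrict f {1..k} \<in> (\<Pi>\<^sub>E i\<in>{1..k}. {1..n})" using f_into by auto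
    moreover have "F = induced_graph k E (restrict f {1..k})"
      unfolding induced_graph_restrict by (rule induced_graph_eqI[OF F iff])
    ultimately show ?thesis
      using True \<open>E \<in> M n\<close> unfolding induced_graphs_from_def by blast
  next
    case False
    have "good_graph eps (1/2) c n E" using good \<open>E \<in> M n\<close> by (auto simp: good_graphs_def)
    with False have "F \<in> degenerate_graphs (nat \<lceil>c\<rceil>) {1..k}"
      by (intro induced_subgraph_degenerate[OF F inj f_into iff] good_graph_small_subsets_sparse)
        auto
    then show ?thesis by blast
  qed
qed

lemma finite_good_graphs: "finite (good_graphs eps eps' c n)"
proof (rule finite_subset)
  show "good_graphs eps eps' c n \<subseteq> Pow (Pow {1..n})"
  proof
    fix E assume "E \<in> good_graphs eps eps' c n"
    then have "is_graph_on n E" by (simp add: good_graphs_def good_graph_def)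
    then show "E \<in> Pow (Pow {1..n})" unfolding is_graph_on_def by auto
  qed
qed simp

lemma le_four_power_if_le_two_powr_sqrt:
  assumes "real a \<le> 2 powr sqrt (real n)" and "n < 2 * k\<^sup>2"
  shows "a \<le> 4 ^ k"
proof -
  have "real n \<le> (real (2 * k))\<^sup>2"
    using assms(2) of_nat_le_iff[of n "(2 * k)\<^sup>2"] by (simp add: power2_eq_square)
  then have "sqrt (real n) \<le> real (2 * k)" by (intro real_le_lsqrt) simp_all
  then have "real a \<le> 2 powr real (2 * k)"
    using assms(1) by (meson order_trans powr_mono one_le_numeral)
  also have "\<dots> = 2 ^ (2 * k)" by (rule powr_realpow) simp
  also have "\<dots> = real (4 ^ k)" by (simp add: power_mult)
  finally show ?thesis by (simp only: of_nat_le_iff)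
qed

lemma induced_graphs_count_le_power:
  fixes k :: nat assumes "2 \<le> k"
  shows "2 * k\<^sup>2 * 4 ^ k * (2 * k\<^sup>2) ^ k \<le> k ^ (8 * k)"
proof -
  have k2: "2 * k\<^sup>2 \<le> k ^ 3" using assms by (simp add: power2_eq_square power3_eq_cube)
  have k4: "4 \<le> k\<^sup>2" using power_mono[OF assms, of 2] by simp
  have "2 * k\<^sup>2 * 4 ^ k * (2 * k\<^sup>2) ^ k \<le> k ^ 3 * (k\<^sup>2) ^ k * (k ^ 3) ^ k"
    by (intro mult_mono power_mono k2 k4) auto
  also have "\<dots> = k ^ (3 + 5 * k)"
    by (simp add: power_mult[symmetric] power_add[symmetric] algebra_simps)
  also have "\<dots> \<le> k ^ (8 * k)" using assms by (intro power_increasing) auto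
  finally show ?thesis .
qed

lemma degenerate_count_le_power:
  fixes k d :: nat assumes "d + 1 \<le> k"
  shows "(k * (d + 1) * k ^ d) ^ k \<le> k ^ ((d + 2) * k)"
proof -
  have "(k * (d + 1) * k ^ d) ^ k \<le> (k * k * k ^ d) ^ k"
    using assms by (intro power_mono mult_mono) auto
  also have "\<dots> = k ^ ((d + 2) * k)"
    by (simp add: power_mult[symmetric] power_add[symmetric] algebra_simps)
  finally show ?thesis .
qed

lemma add_le_power_add:
  fixes a b k m :: nat assumes "2 \<le> k" "a \<le> k ^ m" "b \<le> k ^ m"
  shows "a + b \<le> k ^ (m + k)"
proof -
  have "a + b \<le> 2 * k ^ m" using assms(2,3) by simp
  also have "\<dots> \<le> k ^ k * k ^ m"
    using assms(1) order_trans[OF assms(1) self_le_power[of k k]] by (intro mult_right_mono) auto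
  finally show ?thesis by (simp add: power_add mult.commute)
qed

lemma card_hereditary_closure_slice_le:
  assumes good: "\<And>n. M n \<subseteq> good_graphs eps (1/2) c n"
    and few: "\<And>n. real (card (M n)) \<le> 2 powr sqrt (real n)"
    and k: "nat \<lceil>c\<rceil> + 2 \<le> k"
  shows "card {F. (k, F) \<in> hereditary_closure (\<Union>n. {(n, E) | E. E \<in> M n})}
    \<le> k ^ ((nat \<lceil>c\<rceil> + 9) * k)"
proof -
  define d where "d = nat \<lceil>c\<rceil>"
  have fin: "finite (M n)" for n using good finite_good_graphs by (rule finite_subset)
  have "card (induced_graphs_from M (2 * k\<^sup>2) k) \<le> 2 * k\<^sup>2 * 4 ^ k * (2 * k\<^sup>2) ^ k"
    using fin le_four_power_if_le_two_powr_sqrt[OF few] by (rule card_induced_graphs_from_le)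
  also have "\<dots> \<le> k ^ (8 * k)" using k by (intro induced_graphs_count_le_power) simp
  also have "\<dots> \<le> k ^ ((d + 8) * k)" using k by (intro power_increasing) simp_all
  finally have I: "card (induced_graphs_from M (2 * k\<^sup>2) k) \<le> k ^ ((d + 8) * k)" .
  have "card (degenerate_graphs d {1..k}) \<le> (k * (d + 1) * k ^ d) ^ k"
    using card_degenerate_graphs_le[of "{1..k}" d] by simp
  also have "\<dots> \<le> k ^ ((d + 2) * k)" using k by (intro degenerate_count_le_power) (simp add: d_def)
  also have "\<dots> \<le> k ^ ((d + 8) * k)" using k by (intro power_increasing) (simp_all add: algebra_simps)
  finally have D: "card (degenerate_graphs d {1..k}) \<le> k ^ ((d + 8) * k)" .
  have "card {F. (k, F) \<in> hereditary_closure (\<Union>n. {(n, E) | E. E \<in> M n})}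
      \<le> card (induced_graphs_from M (2 * k\<^sup>2) k \<union> degenerate_graphs d {1..k})"
    using hereditary_closure_slice_subset[OF good, of k]
    by (intro card_mono) (simp_all add: d_def fin finite_induced_graphs_from finite_degenerate_graphs)
  also have "\<dots> \<le> card (induced_graphs_from M (2 * k\<^sup>2) k) + card (degenerate_graphs d {1..k})"
    by (rule card_Un_le)
  also have "\<dots> \<le> k ^ ((d + 8) * k + k)"
    using k by (intro add_le_power_add I D) simp
  finally show ?thesis by (simp add: d_def algebra_simps)
qed

lemma at_most_factorial_speedI:
  assumes "\<And>k. N \<le> k \<Longrightarrow> card {F. (k, F) \<in> H} \<le> k ^ (C * k)" and "1 \<le> N"
  shows "at_most_factorial_speed H"
  unfolding at_most_factorial_speed_def
proof (intro exI allI impI)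
  fix k assume "N \<le> k"
  then have "real (card {F. (k, F) \<in> H}) \<le> real k ^ (C * k)"
    using assms(1) of_nat_le_iff by (metis of_nat_power)
  also have "\<dots> = real k powr real (C * k)"
    using \<open>N \<le> k\<close> assms(2) by (intro powr_realpow[symmetric]) simp
  also have "\<dots> = (2 powr log 2 (real k)) powr real (C * k)"
    using \<open>N \<le> k\<close> assms(2) by simp
  also have "\<dots> = 2 powr (real C * real k * log 2 (real k))"
    by (simp add: powr_powr algebra_simps)
  finally show "real (card {F. (k, F) \<in> H}) \<le> 2 powr (real C * real k * log 2 (real k))" .
qed

theorem claim3p1:
  fixes \<delta> :: real and M :: "nat \<Rightarrow> nat set set set"
  assumes "0 < \<delta>" and "\<delta> < 1"
    and "\<And>n. even n \<Longrightarrow> M n \<subseteq> good_graphs (1/2 + \<delta>/2) (1/2) (8 / \<delta>) n"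
    and "\<And>n. even n \<Longrightarrow> real (card (M n)) \<le> 2 powr sqrt (real n)"
    and "\<And>n. odd n \<Longrightarrow> M n = {}"
  shows "at_most_factorial_speed (hereditary_closure (\<Union>n. {(n, E) | E. E \<in> M n}))"
proof -
  have good: "M n \<subseteq> good_graphs (1/2 + \<delta>/2) (1/2) (8 / \<delta>) n" for n
    using assms(3,5) by (cases "even n") auto
  have few: "real (card (M n)) \<le> 2 powr sqrt (real n)" for n
    using assms(4,5) by (cases "even n") auto
  show ?thesis
    using card_hereditary_closure_slice_le[OF good few]
    by (intro at_most_factorial_speedI[where N = "nat \<lceil>8 / \<delta>\<rceil> + 2"]) auto
qed

end
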